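(* Let $G$ be a finite multigraph without self-loops and let $G'$ be obtained from $G$ by a single channel-preserving move. Then $|\mathcal{C}(G)|=|\mathcal{C}(G')|$. If moreover $G$ is bipartite, then $|\mathcal{C}_B(G)|=|\mathcal{C}_B(G')|$ and $|\mathcal{C}_W(G)|=|\mathcal{C}_W(G')|$.
   Context: Multiple edges are allowed. For a vertex $v$, $N(v)$ is the multiset of neighbours of $v$, each neighbour appearing with multiplicity equal to the number of edges joining it to $v$; for a vertex set $C$, $|N(v)\cap C|$ counts elements of $N(v)$ lying in $C$ with multiplicity. A channel is a vertex set $C$ with $|N(v)\cap C|$ even for every vertex $v$ (empty set included); $\mathcal{C}(G)$ is the set of channels, and for bipartite $G$, $\mathcal{C}_B(G)$ and $\mathcal{C}_W(G)$ are the sets of channels consisting only of black, resp. only of white, vertices. The channel-preserving moves are: (VC) 2-valent vertex contraction: for a vertex $v$ of degree $2$ adjacent to two distinct vertices $v_1,v_2$, contract both edges at $v$ (merging $v,v_1,v_2$ into one vertex) and delete any resulting self-loops; (ED) doubled edge deletion: delete two edges having the same pair of endpoints; (FV) forced vertex pair removal: for distinct adjacent vertices $v_1,v_2$ with $\deg v_1=1$, delete $v_1,v_2$ and all edges incident to them. In the bipartite case, the merged vertex in (VC) receives the common color of $v_1,v_2$. *)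

theory Defs
  imports Main
begin

text \<open>A finite multigraph without self-loops on vertex set V: m u w is the number
  of edges joining u and w (symmetric, zero on the diagonal, supported on V).\<close>
definition multigraph :: "'v set \<Rightarrow> ('v \<Rightarrow> 'v \<Rightarrow> nat) \<Rightarrow> bool" where
  "multigraph V m \<longleftrightarrow> finite V \<and> (\<forall>u w. m u w = m w u) \<and> (\<forall>u. m u u = 0)
     \<and> (\<forall>u w. m u w \<noteq> 0 \<longrightarrow> u \<in> V \<and> w \<in> V)"

definition deg :: "'v set \<Rightarrow> ('v \<Rightarrow> 'v \<Rightarrow> nat) \<Rightarrow> 'v \<Rightarrow> nat" where
  "deg V m v = (\<Sum>u\<in>V. m v u)"

definition nbr_count :: "('v \<Rightarrow> 'v \<Rightarrow> nat) \<Rightarrow> 'v \<Rightarrow> 'v set \<Rightarrow> nat" where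
  "nbr_count m v C = (\<Sum>u\<in>C. m v u)"

definition channels :: "'v set \<Rightarrow> ('v \<Rightarrow> 'v \<Rightarrow> nat) \<Rightarrow> 'v set set" where
  "channels V m = {C. C \<subseteq> V \<and> (\<forall>v\<in>V. even (nbr_count m v C))}"

text \<open>Bipartite with respect to a colouring col (True = black, False = white).\<close>
definition bipartite :: "'v set \<Rightarrow> ('v \<Rightarrow> 'v \<Rightarrow> nat) \<Rightarrow> ('v \<Rightarrow> bool) \<Rightarrow> bool" where
  "bipartite V m col \<longleftrightarrow> (\<forall>u w. m u w \<noteq> 0 \<longrightarrow> col u \<noteq> col w)"

definition channels_B :: "'v set \<Rightarrow> ('v \<Rightarrow> 'v \<Rightarrow> nat) \<Rightarrow> ('v \<Rightarrow> bool) \<Rightarrow> 'v set set" where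
  "channels_B V m col = {C \<in> channels V m. \<forall>x\<in>C. col x}"

definition channels_W :: "'v set \<Rightarrow> ('v \<Rightarrow> 'v \<Rightarrow> nat) \<Rightarrow> ('v \<Rightarrow> bool) \<Rightarrow> 'v set set" where
  "channels_W V m col = {C \<in> channels V m. \<forall>x\<in>C. \<not> col x}"

text \<open>(VC): v has degree 2 and is adjacent to distinct v1, v2; v, v1, v2 are merged
  into a single vertex w (any name not clashing with the remaining vertices), and
  resulting self-loops are deleted.\<close>
definition vc_move :: "'v set \<Rightarrow> ('v \<Rightarrow> 'v \<Rightarrow> nat) \<Rightarrow> ('v \<Rightarrow> bool) \<Rightarrow>
    'v set \<Rightarrow> ('v \<Rightarrow> 'v \<Rightarrow> nat) \<Rightarrow> ('v \<Rightarrow> bool) \<Rightarrow> bool" where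
  "vc_move V m col V' m' col' \<longleftrightarrow>
    (\<exists>v v1 v2 w. v \<in> V \<and> deg V m v = 2 \<and> v1 \<noteq> v2 \<and> m v v1 \<noteq> 0 \<and> m v v2 \<noteq> 0 \<and>
       w \<notin> V - {v, v1, v2} \<and>
       (let f = (\<lambda>x. if x \<in> {v, v1, v2} then w else x) in
         V' = f ` V \<and>
         m' = (\<lambda>x y. if x = y then 0 else
                 (\<Sum>a\<in>V. \<Sum>b\<in>V. if f a = x \<and> f b = y then m a b else 0))) \<and>
       col' = col(w := col v1))"

definition ed_move :: "'v set \<Rightarrow> ('v \<Rightarrow> 'v \<Rightarrow> nat) \<Rightarrow> ('v \<Rightarrow> bool) \<Rightarrow>
    'v set \<Rightarrow> ('v \<Rightarrow> 'v \<Rightarrow> nat) \<Rightarrow> ('v \<Rightarrow> bool) \<Rightarrow> bool" where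
  "ed_move V m col V' m' col' \<longleftrightarrow>
    (\<exists>u w. u \<noteq> w \<and> m u w \<ge> 2 \<and> V' = V \<and>
       m' = (\<lambda>x y. if (x = u \<and> y = w) \<or> (x = w \<and> y = u) then m x y - 2 else m x y) \<and>
       col' = col)"

definition fv_move :: "'v set \<Rightarrow> ('v \<Rightarrow> 'v \<Rightarrow> nat) \<Rightarrow> ('v \<Rightarrow> bool) \<Rightarrow>
    'v set \<Rightarrow> ('v \<Rightarrow> 'v \<Rightarrow> nat) \<Rightarrow> ('v \<Rightarrow> bool) \<Rightarrow> bool" where
  "fv_move V m col V' m' col' \<longleftrightarrow>
    (\<exists>v1 v2. v1 \<in> V \<and> v1 \<noteq> v2 \<and> m v1 v2 \<noteq> 0 \<and> deg V m v1 = 1 \<and>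
       V' = V - {v1, v2} \<and>
       m' = (\<lambda>x y. if x \<in> {v1, v2} \<or> y \<in> {v1, v2} then 0 else m x y) \<and>
       col' = col)"

definition channel_move :: "'v set \<Rightarrow> ('v \<Rightarrow> 'v \<Rightarrow> nat) \<Rightarrow> ('v \<Rightarrow> bool) \<Rightarrow>
    'v set \<Rightarrow> ('v \<Rightarrow> 'v \<Rightarrow> nat) \<Rightarrow> ('v \<Rightarrow> bool) \<Rightarrow> bool" where
  "channel_move V m col V' m' col' \<longleftrightarrow>
    vc_move V m col V' m' col' \<or> ed_move V m col V' m' col' \<or> fv_move V m col V' m' col'"

end

theory Submission
  imports Defs
begin

text \<open>Each move changes the parity conditions only near the vertices it touches, and there
  the channels of both graphs correspond bijectively.
  (ED) changes multiplicities by 2, so no parity and hence no channel changes.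
  (FV) The leaf v1 forces v2 \<notin> C, and the parity at v2 decides whether v1 \<in> C, so
  C \<mapsto> C - {v1} is a bijection onto the channels of G'.
  (VC) The parity at v forces v1 \<in> C \<longleftrightarrow> v2 \<in> C, the parity at v1 decides whether v \<in> C,
  and the parity conditions at v1 and v2 together become the one at the merged vertex w;
  so collapsing v, v1, v2 to w is a bijection.
  In the bipartite case, a vertex added by the inverse map (v1, resp. v) shares a neighbour
  with a vertex already in the channel, hence has its colour.\<close>

definition channels_on :: "'v set \<Rightarrow> ('v \<Rightarrow> 'v \<Rightarrow> nat) \<Rightarrow> ('v \<Rightarrow> bool) \<Rightarrow> 'v set set" where
  "channels_on V m P = {C \<in> channels V m. \<forall>x\<in>C. P x}"

lemma channels_eq_channels_on: "channels V m = channels_on V m (\<lambda>_. True)"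
  by (simp add: channels_on_def)

lemma channels_B_eq_channels_on: "channels_B V m col = channels_on V m col"
  by (simp add: channels_on_def channels_B_def)

lemma channels_W_eq_channels_on: "channels_W V m col = channels_on V m (\<lambda>x. \<not> col x)"
  by (simp add: channels_on_def channels_W_def)

lemma nbr_count_remove:
  "finite C \<Longrightarrow> nbr_count m x C = nbr_count m x (C - {a}) + (if a \<in> C then m x a else 0)"
  unfolding nbr_count_def by (cases "a \<in> C") (simp_all add: sum.remove)

lemma nbr_count_cong: "(\<And>y. y \<in> C \<Longrightarrow> m x y = m' x' y) \<Longrightarrow> nbr_count m x C = nbr_count m' x' C"
  by (simp add: nbr_count_def)

lemma odd_nbr_count_imp_neighbour: "odd (nbr_count m x C) \<Longrightarrow> \<exists>y\<in>C. m x y \<noteq> 0"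
  unfolding nbr_count_def by (metis dvd_0_right sum.neutral)

lemma channels_parity_cong:
  assumes "\<And>x y. even (m x y) \<longleftrightarrow> even (m' x y)"
  shows "channels V m = channels V m'"
proof -
  have "even (nbr_count m x C) \<longleftrightarrow> even (nbr_count m' x C)" for x C
    by (cases "finite C") (simp_all add: nbr_count_def even_sum_iff assms)
  then show ?thesis by (simp add: channels_def)
qed

lemma multigraph_edge_in_vertices: "multigraph V m \<Longrightarrow> m u w \<noteq> 0 \<Longrightarrow> u \<in> V \<and> w \<in> V"
  unfolding multigraph_def by blast

lemma multigraph_sym: "multigraph V m \<Longrightarrow> m u w = m w u"
  by (simp add: multigraph_def)

lemma multigraph_no_loops: "multigraph V m \<Longrightarrow> m u u = 0"
  by (simp add: multigraph_def)

lemma deg_eq_card_neighbours_imp_simple: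
  assumes mg: "multigraph V m" and "finite S" and adj: "\<forall>u\<in>S. m v u \<noteq> 0"
    and deg: "deg V m v = card S"
  shows "m v u = (if u \<in> S then 1 else 0)"
proof -
  have "finite V" using mg by (simp add: multigraph_def)
  have "S \<subseteq> V" using adj multigraph_edge_in_vertices[OF mg] by blast
  have split: "deg V m v = (\<Sum>u\<in>S. m v u) + (\<Sum>u\<in>V - S. m v u)"
    unfolding deg_def using \<open>finite V\<close> \<open>S \<subseteq> V\<close> by (simp add: sum.subset_diff)
  have card_le: "card S \<le> (\<Sum>u\<in>S. m v u)"
    unfolding card_eq_sum using adj by (intro sum_mono) (simp add: Suc_le_eq)
  have outside: "(\<Sum>u\<in>V - S. m v u) = 0" and inside: "(\<Sum>u\<in>S. m v u) = card S"
    using split card_le deg by linarith+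
  have "m v u \<le> 1" if "u \<in> S" for u
  proof (rule ccontr)
    assume "\<not> m v u \<le> 1"
    then have "(\<Sum>u\<in>S. 1) < (\<Sum>u\<in>S. m v u)"
      using adj that \<open>finite S\<close> by (intro sum_strict_mono_ex1) (auto simp: Suc_le_eq not_le)
    then show False using inside by simp
  qed
  moreover have "m v u = 0" if "u \<notin> S"
    using outside that \<open>finite V\<close> multigraph_edge_in_vertices[OF mg, of v u] by auto
  ultimately show ?thesis using adj by (auto simp: le_Suc_eq)
qed

lemma bipartite_common_neighbour:
  "bipartite V m col \<Longrightarrow> m a b \<noteq> 0 \<Longrightarrow> m a c \<noteq> 0 \<Longrightarrow> col b = col c"
  unfolding bipartite_def by (metis (full_types))

definition channel_counts_agree :: "'v set \<Rightarrow> ('v \<Rightarrow> 'v \<Rightarrow> nat) \<Rightarrow> ('v \<Rightarrow> bool) \<Rightarrow>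
    'v set \<Rightarrow> ('v \<Rightarrow> 'v \<Rightarrow> nat) \<Rightarrow> ('v \<Rightarrow> bool) \<Rightarrow> bool" where
  "channel_counts_agree V m col V' m' col' \<longleftrightarrow>
     card (channels V m) = card (channels V' m') \<and>
     (bipartite V m col \<longrightarrow>
        card (channels_B V m col) = card (channels_B V' m' col') \<and>
        card (channels_W V m col) = card (channels_W V' m' col'))"

lemma ed_move_channel_counts_agree:
  assumes mg: "multigraph V m" and "ed_move V m col V' m' col'"
  shows "channel_counts_agree V m col V' m' col'"
proof -
  obtain u w where "u \<noteq> w" "m u w \<ge> 2" and V': "V' = V" and col': "col' = col"
    and m': "m' = (\<lambda>x y. if (x = u \<and> y = w) \<or> (x = w \<and> y = u) then m x y - 2 else m x y)"
    using assms(2) unfolding ed_move_def by blast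
  moreover have "m w u \<ge> 2" using \<open>m u w \<ge> 2\<close> multigraph_sym[OF mg] by metis
  ultimately have "even (m x y) \<longleftrightarrow> even (m' x y)" for x y
    by (auto simp: m' dest!: le_Suc_ex)
  then have "channels V m = channels V' m'"
    unfolding V' by (rule channels_parity_cong)
  then show ?thesis
    by (simp add: channel_counts_agree_def channels_B_def channels_W_def col')
qed

locale forced_pair =
  fixes V :: "'v set" and m :: "'v \<Rightarrow> 'v \<Rightarrow> nat" and v1 v2 :: 'v
  assumes multigraph: "multigraph V m"
    and v1_in: "v1 \<in> V" and v1_neq_v2: "v1 \<noteq> v2" and edge: "m v1 v2 \<noteq> 0"
    and leaf: "deg V m v1 = 1"
begin

definition pruned :: "'v \<Rightarrow> 'v \<Rightarrow> nat" where
  "pruned x y = (if x \<in> {v1, v2} \<or> y \<in> {v1, v2} then 0 else m x y)"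

lemma finite_vertices: "finite V"
  using multigraph by (simp add: multigraph_def)

lemma weight_from_leaf: "m v1 y = (if y = v2 then 1 else 0)"
  using deg_eq_card_neighbours_imp_simple[OF multigraph, of "{v2}" v1 y] edge leaf by simp

lemma weight_to_leaf: "m x v1 = (if x = v2 then 1 else 0)"
  using weight_from_leaf multigraph_sym[OF multigraph, of v1 x] by simp

lemma v2_in: "v2 \<in> V"
  using multigraph_edge_in_vertices[OF multigraph edge] by simp

lemma ball_vertices_iff:
  "(\<forall>x\<in>V. Q x) \<longleftrightarrow> Q v1 \<and> Q v2 \<and> (\<forall>x\<in>V - {v1, v2}. Q x)"
  using v1_in v2_in by blast

lemma channel_iff:
  assumes "C \<subseteq> V"
  shows "C \<in> channels V m \<longleftrightarrow>
    v2 \<notin> C \<and> (v1 \<in> C \<longleftrightarrow> odd (nbr_count m v2 (C - {v1}))) \<and>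
    (\<forall>x\<in>V - {v1, v2}. even (nbr_count m x (C - {v1})))"
proof -
  have "finite C" using assms finite_subset finite_vertices by blast
  have at_v1: "even (nbr_count m v1 C) \<longleftrightarrow> v2 \<notin> C"
    using \<open>finite C\<close> by (simp add: nbr_count_def weight_from_leaf)
  have "nbr_count m v2 C = nbr_count m v2 (C - {v1}) + (if v1 \<in> C then 1 else 0)"
    using nbr_count_remove[OF \<open>finite C\<close>, of m v2 v1] weight_to_leaf[of v2] by simp
  then have at_v2: "even (nbr_count m v2 C) \<longleftrightarrow> (v1 \<in> C \<longleftrightarrow> odd (nbr_count m v2 (C - {v1})))"
    by (cases "v1 \<in> C") simp_all
  have elsewhere: "nbr_count m x C = nbr_count m x (C - {v1})" if "x \<noteq> v2" for x
    using nbr_count_remove[OF \<open>finite C\<close>, of m x v1] weight_to_leaf[of x] that by simp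
  show ?thesis
    unfolding channels_def mem_Collect_eq ball_vertices_iff at_v1 at_v2
    using assms elsewhere by simp
qed

lemma pruned_channel_iff:
  assumes "D \<subseteq> V - {v1, v2}"
  shows "D \<in> channels (V - {v1, v2}) pruned \<longleftrightarrow> (\<forall>x\<in>V - {v1, v2}. even (nbr_count m x D))"
proof -
  have "nbr_count pruned x D = nbr_count m x D" if "x \<in> V - {v1, v2}" for x
    using that assms by (intro nbr_count_cong) (auto simp: pruned_def)
  then show ?thesis using assms by (simp add: channels_def)
qed

lemma card_channels_on_pruned:
  assumes "\<And>y. m v2 y \<noteq> 0 \<Longrightarrow> P y = P v1"
  shows "card (channels_on V m P) = card (channels_on (V - {v1, v2}) pruned P)"
proof -
  define extend where "extend D = D \<union> (if odd (nbr_count m v2 D) then {v1} else {})" for D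
  have "bij_betw (\<lambda>C. C - {v1}) (channels_on V m P) (channels_on (V - {v1, v2}) pruned P)"
  proof (rule bij_betw_byWitness[where f' = extend])
    show "\<forall>C\<in>channels_on V m P. extend (C - {v1}) = C"
    proof
      fix C assume "C \<in> channels_on V m P"
      then have "C \<subseteq> V" "C \<in> channels V m" by (auto simp: channels_on_def channels_def)
      then have "v1 \<in> C \<longleftrightarrow> odd (nbr_count m v2 (C - {v1}))" using channel_iff by blast
      then show "extend (C - {v1}) = C" by (auto simp: extend_def)
    qed
    show "\<forall>D\<in>channels_on (V - {v1, v2}) pruned P. extend D - {v1} = D"
      by (auto simp: channels_on_def extend_def channels_def)
    show "(\<lambda>C. C - {v1}) ` channels_on V m P \<subseteq> channels_on (V - {v1, v2}) pruned P"
    proof safe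
      fix C assume C: "C \<in> channels_on V m P"
      then have sub: "C \<subseteq> V" and "C \<in> channels V m" by (auto simp: channels_on_def channels_def)
      then have "v2 \<notin> C" "\<forall>x\<in>V - {v1, v2}. even (nbr_count m x (C - {v1}))"
        using channel_iff by blast+
      then have "C - {v1} \<in> channels (V - {v1, v2}) pruned"
        using pruned_channel_iff[of "C - {v1}"] sub by blast
      then show "C - {v1} \<in> channels_on (V - {v1, v2}) pruned P"
        using C by (simp add: channels_on_def)
    qed
    show "extend ` channels_on (V - {v1, v2}) pruned P \<subseteq> channels_on V m P"
    proof safe
      fix D assume D: "D \<in> channels_on (V - {v1, v2}) pruned P"
      then have sub: "D \<subseteq> V - {v1, v2}" and P_D: "\<forall>x\<in>D. P x"
        and even: "\<forall>x\<in>V - {v1, v2}. even (nbr_count m x D)"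
        using pruned_channel_iff by (auto simp: channels_on_def channels_def)
      have ext: "extend D - {v1} = D" "v2 \<notin> extend D" "extend D \<subseteq> V"
        "v1 \<in> extend D \<longleftrightarrow> odd (nbr_count m v2 D)"
        using sub v1_in v1_neq_v2 by (auto simp: extend_def)
      have "extend D \<in> channels V m"
        unfolding channel_iff[OF ext(3)] ext(1) using ext(2,4) even by blast
      moreover have "P v1" if "odd (nbr_count m v2 D)"
        using odd_nbr_count_imp_neighbour[OF that] P_D assms by blast
      ultimately show "extend D \<in> channels_on V m P"
        using P_D by (auto simp: channels_on_def extend_def)
    qed
  qed
  then show ?thesis by (rule bij_betw_same_card)
qed

end

lemma fv_move_channel_counts_agree:
  assumes mg: "multigraph V m" and "fv_move V m col V' m' col'"
  shows "channel_counts_agree V m col V' m' col'"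
proof -
  obtain v1 v2 where pair: "forced_pair V m v1 v2" and V': "V' = V - {v1, v2}" and col': "col' = col"
    and m': "m' = (\<lambda>x y. if x \<in> {v1, v2} \<or> y \<in> {v1, v2} then 0 else m x y)"
    using assms unfolding fv_move_def forced_pair_def by blast
  interpret forced_pair V m v1 v2 by (rule pair)
  have counts: "card (channels_on V m P) = card (channels_on V' m' P)"
    if "\<And>y. m v2 y \<noteq> 0 \<Longrightarrow> P y = P v1" for P
    using card_channels_on_pruned[of P, OF that] by (simp add: V' m' pruned_def[abs_def])
  have "col y = col v1" if "bipartite V m col" "m v2 y \<noteq> 0" for y
    using bipartite_common_neighbour[OF that] edge multigraph_sym[OF mg, of v1 v2] by metis
  then show ?thesis
    unfolding channel_counts_agree_def channels_eq_channels_on channels_B_eq_channels_on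
      channels_W_eq_channels_on col'
    by (intro conjI impI counts) auto
qed

locale contractible_vertex =
  fixes V :: "'v set" and m :: "'v \<Rightarrow> 'v \<Rightarrow> nat" and v v1 v2 w :: 'v
  assumes multigraph: "multigraph V m"
    and v_in: "v \<in> V" and deg_two: "deg V m v = 2" and v1_neq_v2: "v1 \<noteq> v2"
    and edge1: "m v v1 \<noteq> 0" and edge2: "m v v2 \<noteq> 0" and fresh: "w \<notin> V - {v, v1, v2}"
begin

definition merge :: "'v \<Rightarrow> 'v" where
  "merge x = (if x \<in> {v, v1, v2} then w else x)"

definition merged :: "'v \<Rightarrow> 'v \<Rightarrow> nat" where
  "merged x y = (if x = y then 0 else
     (\<Sum>a\<in>V. \<Sum>b\<in>V. if merge a = x \<and> merge b = y then m a b else 0))"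

abbreviation rest :: "'v set" where
  "rest \<equiv> V - {v, v1, v2}"

definition expand :: "'v set \<Rightarrow> 'v set" where
  "expand D = (D - {w}) \<union> (if w \<in> D then {v1, v2} else {})"

lemma finite_vertices: "finite V"
  using multigraph by (simp add: multigraph_def)

lemma v1_in: "v1 \<in> V" and v2_in: "v2 \<in> V"
  using multigraph_edge_in_vertices[OF multigraph] edge1 edge2 by blast+

lemma centre_distinct: "v \<noteq> v1" "v \<noteq> v2"
  using edge1 edge2 multigraph_no_loops[OF multigraph] by auto

lemma weight_from_centre: "m v u = (if u \<in> {v1, v2} then 1 else 0)"
  using deg_eq_card_neighbours_imp_simple[OF multigraph, of "{v1, v2}" v u]
    edge1 edge2 deg_two v1_neq_v2 by simp

lemma weight_to_centre: "m u v = (if u \<in> {v1, v2} then 1 else 0)"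
  using weight_from_centre multigraph_sym[OF multigraph, of v u] by simp

lemma merge_image: "merge ` V = insert w rest"
  using v_in by (auto simp: merge_def)

lemma merge_fibre_rest: "x \<in> rest \<Longrightarrow> {a \<in> V. merge a = x} = {x}"
  using fresh by (auto simp: merge_def)

lemma merge_fibre_w: "{a \<in> V. merge a = w} = {v, v1, v2}"
  using fresh v_in v1_in v2_in by (auto simp: merge_def)

lemma merged_eq_fibre_sum:
  assumes "x \<noteq> y"
  shows "merged x y = (\<Sum>a\<in>{a\<in>V. merge a = x}. \<Sum>b\<in>{b\<in>V. merge b = y}. m a b)"
proof -
  have "(\<Sum>b\<in>V. if merge a = x \<and> merge b = y then m a b else 0)
      = (if merge a = x then (\<Sum>b\<in>{b\<in>V. merge b = y}. m a b) else 0)" for a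
    using finite_vertices by (simp add: sum.inter_filter)
  then have "merged x y = (\<Sum>a\<in>V. if merge a = x then (\<Sum>b\<in>{b\<in>V. merge b = y}. m a b) else 0)"
    using assms by (simp add: merged_def)
  also have "\<dots> = (\<Sum>a\<in>{a\<in>V. merge a = x}. \<Sum>b\<in>{b\<in>V. merge b = y}. m a b)"
    using finite_vertices by (rule sum.inter_filter[symmetric])
  finally show ?thesis .
qed

lemma merged_rest:
  assumes "x \<in> rest" "y \<in> rest"
  shows "merged x y = m x y"
proof (cases "x = y")
  case True
  then show ?thesis by (simp add: merged_def multigraph_no_loops[OF multigraph])
next
  case False
  then show ?thesis using assms by (simp add: merged_eq_fibre_sum merge_fibre_rest)
qed

lemma merged_rest_to_w:
  assumes "x \<in> rest"
  shows "merged x w = m x v1 + m x v2"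
proof -
  have "x \<noteq> w" using assms fresh by blast
  then show ?thesis
    using assms centre_distinct v1_neq_v2
    by (simp add: merged_eq_fibre_sum merge_fibre_rest merge_fibre_w weight_to_centre)
qed

lemma merged_w_to_rest:
  assumes "x \<in> rest"
  shows "merged w x = m v1 x + m v2 x"
proof -
  have "w \<noteq> x" using assms fresh by blast
  then show ?thesis
    using assms centre_distinct v1_neq_v2
    by (simp add: merged_eq_fibre_sum merge_fibre_rest merge_fibre_w weight_from_centre)
qed

lemma nbr_count_expand:
  assumes "D \<subseteq> insert w rest"
  shows "nbr_count m x (expand D) = nbr_count m x (D - {w}) + (if w \<in> D then m x v1 + m x v2 else 0)"
proof (cases "w \<in> D")
  case True
  have "finite D" using assms finite_vertices finite_subset by blast
  moreover have "(D - {w}) \<inter> {v1, v2} = {}" using assms by blast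
  ultimately show ?thesis
    using True v1_neq_v2 by (simp add: expand_def nbr_count_def sum.union_disjoint)
next
  case False
  then show ?thesis by (simp add: expand_def)
qed

lemma nbr_count_merged_rest:
  assumes "D \<subseteq> insert w rest" and "x \<in> rest"
  shows "nbr_count merged x D = nbr_count m x (expand D)"
proof -
  have "finite D" using assms finite_vertices finite_subset by blast
  have "nbr_count merged x (D - {w}) = nbr_count m x (D - {w})"
  proof (rule nbr_count_cong)
    fix y assume "y \<in> D - {w}"
    then show "merged x y = m x y" using assms by (blast intro: merged_rest)
  qed
  then show ?thesis
    using nbr_count_remove[OF \<open>finite D\<close>, of merged x w]
    by (simp add: nbr_count_expand[OF assms(1)] merged_rest_to_w[OF assms(2)])
qed

text \<open>The v1--v2 edges become loops under contraction and are deleted; they are counted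
  twice on the right, so parities agree.\<close>
lemma nbr_count_merged_w:
  assumes "D \<subseteq> insert w rest"
  shows "nbr_count merged w D + (if w \<in> D then 2 * m v1 v2 else 0)
    = nbr_count m v1 (expand D) + nbr_count m v2 (expand D)"
proof -
  have "finite D" using assms finite_vertices finite_subset by blast
  have "nbr_count merged w (D - {w}) = (\<Sum>y\<in>D - {w}. m v1 y + m v2 y)"
    unfolding nbr_count_def
  proof (rule sum.cong)
    fix y assume "y \<in> D - {w}"
    then show "merged w y = m v1 y + m v2 y" using assms by (blast intro: merged_w_to_rest)
  qed simp
  then have "nbr_count merged w D = nbr_count m v1 (D - {w}) + nbr_count m v2 (D - {w})"
    using nbr_count_remove[OF \<open>finite D\<close>, of merged w w]
    by (simp add: merged_def nbr_count_def sum.distrib)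
  then show ?thesis
    using multigraph_no_loops[OF multigraph] multigraph_sym[OF multigraph, of v1 v2]
    by (simp add: nbr_count_expand[OF assms])
qed

lemma merged_channel_iff:
  assumes "D \<subseteq> insert w rest"
  shows "D \<in> channels (insert w rest) merged \<longleftrightarrow>
    even (nbr_count m v1 (expand D) + nbr_count m v2 (expand D)) \<and>
    (\<forall>x\<in>rest. even (nbr_count m x (expand D)))"
proof -
  have "even (nbr_count merged w D)
      \<longleftrightarrow> even (nbr_count merged w D + (if w \<in> D then 2 * m v1 v2 else 0))"
    by simp
  then have "even (nbr_count merged w D)
      \<longleftrightarrow> even (nbr_count m v1 (expand D) + nbr_count m v2 (expand D))"
    unfolding nbr_count_merged_w[OF assms] .
  then show ?thesis
    using assms nbr_count_merged_rest[OF assms] by (simp add: channels_def)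
qed

lemma vertices_eq: "V = insert v (insert v1 (insert v2 rest))"
  using v_in v1_in v2_in by blast

lemma channel_iff:
  assumes "C \<subseteq> V"
  shows "C \<in> channels V m \<longleftrightarrow>
    (v1 \<in> C \<longleftrightarrow> v2 \<in> C) \<and> (v \<in> C \<longleftrightarrow> odd (nbr_count m v1 (C - {v}))) \<and>
    even (nbr_count m v1 (C - {v}) + nbr_count m v2 (C - {v})) \<and>
    (\<forall>x\<in>rest. even (nbr_count m x (C - {v})))"
proof -
  have "finite C" using assms finite_vertices finite_subset by blast
  have "nbr_count m v (C - {v1} - {v2}) = 0"
    by (simp add: nbr_count_def weight_from_centre)
  then have "nbr_count m v C = (if v1 \<in> C then 1 else 0) + (if v2 \<in> C then 1 else 0)"
    using nbr_count_remove[OF \<open>finite C\<close>, of m v v1] nbr_count_remove[of "C - {v1}" m v v2]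
      \<open>finite C\<close> v1_neq_v2 by (simp add: weight_from_centre)
  then have at_v: "even (nbr_count m v C) \<longleftrightarrow> (v1 \<in> C \<longleftrightarrow> v2 \<in> C)"
    by (cases "v1 \<in> C"; cases "v2 \<in> C") simp_all
  have "nbr_count m u C = nbr_count m u (C - {v}) + (if v \<in> C then 1 else 0)" if "u \<in> {v1, v2}" for u
    using nbr_count_remove[OF \<open>finite C\<close>, of m u v] that by (simp add: weight_to_centre)
  then have at_v12: "even (nbr_count m v1 C) \<and> even (nbr_count m v2 C) \<longleftrightarrow>
      (v \<in> C \<longleftrightarrow> odd (nbr_count m v1 (C - {v}))) \<and>
      even (nbr_count m v1 (C - {v}) + nbr_count m v2 (C - {v}))"
    by (cases "v \<in> C") auto
  have at_rest: "nbr_count m x C = nbr_count m x (C - {v})" if "x \<in> rest" for x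
    using nbr_count_remove[OF \<open>finite C\<close>, of m x v] that by (simp add: weight_to_centre)
  have "C \<in> channels V m \<longleftrightarrow> even (nbr_count m v C) \<and>
      (even (nbr_count m v1 C) \<and> even (nbr_count m v2 C)) \<and> (\<forall>x\<in>rest. even (nbr_count m x C))"
    using assms by (subst vertices_eq) (auto simp: channels_def)
  then show ?thesis
    unfolding at_v at_v12 using at_rest by simp
qed

definition collapse :: "'v set \<Rightarrow> 'v set" where
  "collapse C = (C - {v, v1, v2}) \<union> (if v1 \<in> C then {w} else {})"

lemma expand_collapse: "C \<subseteq> V \<Longrightarrow> (v1 \<in> C \<longleftrightarrow> v2 \<in> C) \<Longrightarrow> expand (collapse C) = C - {v}"
  using fresh centre_distinct by (auto simp: expand_def collapse_def)

lemma collapse_subset: "C \<subseteq> V \<Longrightarrow> collapse C \<subseteq> insert w rest"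
  by (auto simp: collapse_def)

lemma expand_subset: "D \<subseteq> insert w rest \<Longrightarrow> expand D \<subseteq> V - {v}"
  using v1_in v2_in centre_distinct by (auto simp: expand_def)

lemma collapse_expand: "D \<subseteq> insert w rest \<Longrightarrow> collapse (expand D \<union> X) = D" if "X \<subseteq> {v}"
  using that v1_neq_v2 centre_distinct by (auto simp: expand_def collapse_def)

lemma card_channels_on_merged:
  assumes "P v1 = P v2" and "\<And>y. m v1 y \<noteq> 0 \<Longrightarrow> P y = P v"
  shows "card (channels_on V m P) = card (channels_on (merge ` V) merged (P(w := P v1)))"
proof -
  define extend where
    "extend D = expand D \<union> (if odd (nbr_count m v1 (expand D)) then {v} else {})" for D
  have "bij_betw collapse (channels_on V m P) (channels_on (insert w rest) merged (P(w := P v1)))"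
  proof (rule bij_betw_byWitness[where f' = extend])
    show "\<forall>C\<in>channels_on V m P. extend (collapse C) = C"
    proof
      fix C assume "C \<in> channels_on V m P"
      then have "C \<subseteq> V" "C \<in> channels V m" by (auto simp: channels_on_def channels_def)
      then have "v1 \<in> C \<longleftrightarrow> v2 \<in> C" "v \<in> C \<longleftrightarrow> odd (nbr_count m v1 (C - {v}))"
        using channel_iff by blast+
      then show "extend (collapse C) = C"
        using \<open>C \<subseteq> V\<close> by (auto simp: extend_def expand_collapse)
    qed
    show "\<forall>D\<in>channels_on (insert w rest) merged (P(w := P v1)). collapse (extend D) = D"
      unfolding extend_def using collapse_expand by (auto simp: channels_on_def channels_def)
    show "collapse ` channels_on V m P \<subseteq> channels_on (insert w rest) merged (P(w := P v1))"
    proof safe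
      fix C assume C: "C \<in> channels_on V m P"
      then have sub: "C \<subseteq> V" and "C \<in> channels V m" and P_C: "\<forall>x\<in>C. P x"
        by (auto simp: channels_on_def channels_def)
      then have "v1 \<in> C \<longleftrightarrow> v2 \<in> C"
        and "even (nbr_count m v1 (C - {v}) + nbr_count m v2 (C - {v}))"
        and "\<forall>x\<in>rest. even (nbr_count m x (C - {v}))"
        using channel_iff by blast+
      then have "collapse C \<in> channels (insert w rest) merged"
        using merged_channel_iff[OF collapse_subset[OF sub]] expand_collapse[OF sub] by simp
      moreover have "\<forall>x\<in>collapse C. (P(w := P v1)) x"
        using P_C fresh sub by (auto simp: collapse_def)
      ultimately show "collapse C \<in> channels_on (insert w rest) merged (P(w := P v1))"
        by (simp add: channels_on_def)
    qed
    show "extend ` channels_on (insert w rest) merged (P(w := P v1)) \<subseteq> channels_on V m P"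
    proof safe
      fix D assume D: "D \<in> channels_on (insert w rest) merged (P(w := P v1))"
      then have sub: "D \<subseteq> insert w rest" and P_D: "\<forall>x\<in>D. (P(w := P v1)) x"
        and "D \<in> channels (insert w rest) merged"
        by (auto simp: channels_on_def channels_def)
      then have parity: "even (nbr_count m v1 (expand D) + nbr_count m v2 (expand D))"
        "\<forall>x\<in>rest. even (nbr_count m x (expand D))"
        using merged_channel_iff by blast+
      have ext: "extend D \<subseteq> V" "extend D - {v} = expand D"
        "v \<in> extend D \<longleftrightarrow> odd (nbr_count m v1 (expand D))"
        using expand_subset[OF sub] v_in by (auto simp: extend_def)
      have "v1 \<in> expand D \<longleftrightarrow> v2 \<in> expand D"
        using sub v1_neq_v2 by (auto simp: expand_def)
      then have "extend D \<in> channels V m"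
        unfolding channel_iff[OF ext(1)] ext(2,3) using parity centre_distinct
        by (auto simp: extend_def)
      moreover have P_expand: "\<forall>x\<in>expand D. P x"
        using P_D assms(1) by (auto simp: expand_def split: if_splits)
      moreover have "P v" if "odd (nbr_count m v1 (expand D))"
        using odd_nbr_count_imp_neighbour[OF that] P_expand assms(2) by blast
      ultimately show "extend D \<in> channels_on V m P"
        by (auto simp: channels_on_def extend_def)
    qed
  qed
  then show ?thesis unfolding merge_image by (rule bij_betw_same_card)
qed

end

lemma vc_move_channel_counts_agree:
  assumes mg: "multigraph V m" and "vc_move V m col V' m' col'"
  shows "channel_counts_agree V m col V' m' col'"
proof -
  obtain v v1 v2 w where cv: "contractible_vertex V m v v1 v2 w" and col': "col' = col(w := col v1)"
    and V': "V' = (\<lambda>x. if x \<in> {v, v1, v2} then w else x) ` V"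
    and m': "m' = (\<lambda>x y. if x = y then 0 else (\<Sum>a\<in>V. \<Sum>b\<in>V.
       if (if a \<in> {v, v1, v2} then w else a) = x \<and> (if b \<in> {v, v1, v2} then w else b) = y
       then m a b else 0))"
    using assms unfolding vc_move_def contractible_vertex_def Let_def by blast
  interpret contractible_vertex V m v v1 v2 w by (rule cv)
  have "V' = merge ` V" "m' = merged"
    unfolding V' m' merged_def[abs_def] merge_def[abs_def] by (rule refl)+
  then have counts: "card (channels_on V m P) = card (channels_on V' m' (P(w := P v1)))"
    if "P v1 = P v2" "\<And>y. m v1 y \<noteq> 0 \<Longrightarrow> P y = P v" for P
    using card_channels_on_merged[of P, OF that] by simp
  have "card (channels_on V m (\<lambda>_. True)) = card (channels_on V' m' (\<lambda>_. True))"
    using counts[of "\<lambda>_. True"] fun_upd_triv[of "\<lambda>_. True" w] by simp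
  moreover have "card (channels_on V m col) = card (channels_on V' m' col') \<and>
      card (channels_on V m (\<lambda>x. \<not> col x)) = card (channels_on V' m' (\<lambda>x. \<not> col' x))"
    if bip: "bipartite V m col"
  proof -
    have "col v1 = col v2"
      using bipartite_common_neighbour[OF bip edge1 edge2] .
    moreover have "col y = col v" if "m v1 y \<noteq> 0" for y
      using bipartite_common_neighbour[OF bip that] edge1 multigraph_sym[OF mg, of v v1] by metis
    moreover have "(\<lambda>x. \<not> col x)(w := \<not> col v1) = (\<lambda>x. \<not> col' x)"
      by (simp add: fun_eq_iff col')
    ultimately show ?thesis
      using counts[of col] counts[of "\<lambda>x. \<not> col x"] unfolding col' by auto
  qed
  ultimately show ?thesis
    unfolding channel_counts_agree_def channels_eq_channels_on channels_B_eq_channels_on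
      channels_W_eq_channels_on by blast
qed

theorem lemma6p2:
  fixes V V' :: "'v set" and m m' :: "'v \<Rightarrow> 'v \<Rightarrow> nat" and col col' :: "'v \<Rightarrow> bool"
  assumes "multigraph V m"
    and "channel_move V m col V' m' col'"
  shows "card (channels V m) = card (channels V' m') \<and>
         (bipartite V m col \<longrightarrow>
           card (channels_B V m col) = card (channels_B V' m' col') \<and>
           card (channels_W V m col) = card (channels_W V' m' col'))"
proof -
  have "channel_counts_agree V m col V' m' col'"
    using assms(2) unfolding channel_move_def
    using vc_move_channel_counts_agree[OF assms(1)] ed_move_channel_counts_agree[OF assms(1)]
      fv_move_channel_counts_agree[OF assms(1)] by blast
  then show ?thesis unfolding channel_counts_agree_def .
qed

end
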